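(* Let $\Lambda\in\mathbb{R}^{p\times p}$ be a connected discrete-time interconnection, $r\in\mathbb{R}^p$ with $r^T\Lambda=r^T$, $r^T\mathbf 1=1$, and $\Omega$ symmetric positive definite with $(\Lambda-\mathbf 1r^T)^T\Omega(\Lambda-\mathbf 1r^T)-\Omega=-I_p$. Define $V(\mathbf x):=\mathbf x^T(\Omega\otimes I_n)\mathbf x$. Then for every $Q:\mathbb{N}\to\overline{\mathcal Q}_n$ and all $k\in\mathbb{N}$, the solution of $\mathbf x^+=(I_{np}+(\Lambda-I_p)\otimes Q_k)\mathbf x$ satisfies $$V(\mathbf x(k+1)-\bar{\mathbf x})-V(\mathbf x(k)-\bar{\mathbf x})\le-(\mathbf x(k)-\bar{\mathbf x})^T(I_p\otimes Q_k^2)(\mathbf x(k)-\bar{\mathbf x}),$$ where $\bar{\mathbf x}:=(\mathbf 1r^T\otimes I_n)\mathbf x(0)$.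
   Context: $\mathbf 1$ all-ones vector; $\otimes$ Kronecker product; $\overline{\mathcal Q}_n$ symmetric positive semidefinite $n\times n$ matrices with induced 2-norm at most $1$. Discrete-time interconnection: $\lambda_{ij}\ge0$, row sums $1$; graph edge $(n_i,n_j)$ iff $\lambda_{ij}>0$; connected if some node is reachable by a directed path from every other node. *)

theory Defs
  imports "HOL-Analysis.Analysis"
begin

text \<open>Kronecker product. Vectors in R^(p n) are indexed by pairs (i,a), i block index
  (in 'p), a index inside the block (in 'n); this is the standard block ordering.\<close>
definition kron :: "real^'c^'a \<Rightarrow> real^'d^'b \<Rightarrow> real^('c \<times> 'd)^('a \<times> 'b)" where
  "kron A B = (\<chi> ia jb. A $ fst ia $ fst jb * B $ snd ia $ snd jb)"

definition dt_interconnection :: "real^'p^'p \<Rightarrow> bool" where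
  "dt_interconnection L \<longleftrightarrow> (\<forall>i j. L $ i $ j \<ge> 0) \<and> (\<forall>i. (\<Sum>j\<in>UNIV. L $ i $ j) = 1)"

definition graph_edges :: "real^'p^'p \<Rightarrow> ('p \<times> 'p) set" where
  "graph_edges L = {(i, j). L $ i $ j > 0}"

definition connected_graph :: "real^'p^'p \<Rightarrow> bool" where
  "connected_graph L \<longleftrightarrow> (\<exists>c. \<forall>j. (j, c) \<in> (graph_edges L)\<^sup>*)"

definition sym_psd :: "real^'n^'n \<Rightarrow> bool" where
  "sym_psd A \<longleftrightarrow> transpose A = A \<and> (\<forall>v. v \<bullet> (A *v v) \<ge> 0)"

definition sym_pd :: "real^'n^'n \<Rightarrow> bool" where
  "sym_pd A \<longleftrightarrow> transpose A = A \<and> (\<forall>v. v \<noteq> 0 \<longrightarrow> v \<bullet> (A *v v) > 0)"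

definition Qbar :: "(real^'n^'n) set" where
  "Qbar = {A. sym_psd A \<and> onorm (\<lambda>v. A *v v) \<le> 1}"

definition ones_r :: "real^'p \<Rightarrow> real^'p^'p" where
  "ones_r r = (\<chi> i j. r $ j)"

end

theory Submission
  imports Defs
begin

text \<open>Write \<open>M = \<Lambda> - \<one>r\<^sup>T\<close> and \<open>N = M - I\<close>. The projection \<open>\<one>r\<^sup>T \<otimes> I\<close> is invariant along
  solutions, so the error \<open>e = x(k) - x\<^sub>b\<close> is annihilated by it and evolves as
  \<open>e\<^sup>+ = e + (N \<otimes> Q\<^sub>k) e\<close>. Expanding \<open>V(e\<^sup>+) - V(e)\<close> and using the Lyapunov equation in the
  form \<open>N\<^sup>T\<Omega>N + \<Omega>N + N\<^sup>T\<Omega> = -I\<close> gives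
  \<open>V(e\<^sup>+) - V(e) + e\<^sup>T(I \<otimes> Q\<^sup>2)e = -e\<^sup>T(N\<^sup>T\<Omega>N \<otimes> R)e - e\<^sup>T(I \<otimes> R)e\<close> with \<open>R = Q - Q\<^sup>2\<close>,
  which is positive semidefinite because \<open>\<parallel>Q\<parallel> \<le> 1\<close>. Both forms on the right are therefore
  nonnegative once \<open>\<Omega> \<otimes> R\<close> is; instead of a square root of \<open>\<Omega>\<close>, this uses the Lyapunov
  equation once more: along \<open>f\<^sup>+ = (M \<otimes> I) f\<close> the form \<open>f\<^sup>T(\<Omega> \<otimes> R)f\<close> is nonincreasing
  while \<open>\<Sum>\<parallel>f\<parallel>\<^sup>2\<close> is bounded, so it cannot start negative.\<close>

lemma sum_UNIV_Times:
  "(\<Sum>x\<in>(UNIV::('a::finite \<times> 'b::finite) set). g x) = (\<Sum>i\<in>UNIV. \<Sum>a\<in>UNIV. g (i, a))"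
  by (simp add: UNIV_Times_UNIV[symmetric] sum.cartesian_product del: UNIV_Times_UNIV)

lemma matrix_diff_ldistrib: "(A::real^'n^'m) ** (B - C) = A ** B - A ** C"
  by (simp add: matrix_matrix_mult_def vec_eq_iff sum_subtractf algebra_simps)

lemma matrix_diff_rdistrib: "((B::real^'n^'m) - C) ** A = B ** A - C ** A"
  by (simp add: matrix_matrix_mult_def vec_eq_iff sum_subtractf algebra_simps)

lemma matrix_vector_mult_uminus_left: "(- (A::real^'n^'m)) *v x = - (A *v x)"
  by (simp add: matrix_vector_mult_def vec_eq_iff sum_negf)

lemma transpose_diff: "transpose ((A::real^'n^'m) - B) = transpose A - transpose B"
  by (simp add: transpose_def vec_eq_iff)

lemma inner_matrix_vector_transpose: "(x::real^'m) \<bullet> (A *v y) = (transpose A *v x) \<bullet> y"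
  by (metis dot_lmul_matrix transpose_matrix_vector)

lemma inner_transpose_matrix_vector: "((A::real^'n^'m) *v x) \<bullet> y = x \<bullet> (transpose A *v y)"
  by (simp add: inner_matrix_vector_transpose inner_commute)

lemma quadratic_form_transpose: "(x::real^'n) \<bullet> (A *v x) = x \<bullet> (transpose A *v x)"
  by (simp add: inner_matrix_vector_transpose inner_commute)

lemma kron_mult: "kron A B ** kron C D = kron (A ** C) (B ** D)"
  unfolding kron_def matrix_matrix_mult_def
  by (simp add: vec_eq_iff sum_UNIV_Times sum_product) (auto intro!: sum.cong simp: mult_ac)

lemma kron_zero_left [simp]: "kron 0 C = 0"
  unfolding kron_def by (simp add: vec_eq_iff)

lemma kron_add_left: "kron (A + B) C = kron A C + kron B C"
  unfolding kron_def by (simp add: vec_eq_iff algebra_simps)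

lemma kron_diff_left: "kron (A - B) C = kron A C - kron B C"
  unfolding kron_def by (simp add: vec_eq_iff algebra_simps)

lemma kron_uminus_left: "kron (- A) C = - kron A C"
  unfolding kron_def by (simp add: vec_eq_iff)

lemma kron_diff_right: "kron C (A - B) = kron C A - kron C B"
  unfolding kron_def by (simp add: vec_eq_iff algebra_simps)

lemma kron_transpose: "transpose (kron A B) = kron (transpose A) (transpose B)"
  unfolding kron_def transpose_def by (simp add: vec_eq_iff)

lemma kron_mat_1: "kron (mat 1) (mat 1) = mat 1"
  unfolding kron_def mat_def by (auto simp add: vec_eq_iff prod_eq_iff)

lemma inner_kron_conj:
  fixes M Om :: "real^'p^'p" and S :: "real^'n^'n"
  shows "(kron M (mat 1 :: real^'n^'n) *v f) \<bullet> (kron Om S *v (kron M (mat 1) *v f))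
     = f \<bullet> (kron (transpose M ** Om ** M) S *v f)"
  by (simp add: inner_transpose_matrix_vector kron_transpose matrix_vector_mul_assoc kron_mult matrix_mul_assoc)

lemma kron_mat_1_left_apply:
  "(kron (mat 1 :: real^'p^'p) R *v f) $ (i, a) = (R *v (\<chi> b. f $ (i, b))) $ a"
proof -
  have "(kron (mat 1 :: real^'p^'p) R *v f) $ (i, a)
      = (\<Sum>j\<in>UNIV. \<Sum>b\<in>UNIV. (if i = j then 1 else 0) * R $ a $ b * f $ (j, b))"
    unfolding kron_def mat_def matrix_vector_mult_def by (simp add: sum_UNIV_Times)
  also have "\<dots> = (\<Sum>b\<in>UNIV. R $ a $ b * f $ (i, b))"
    by (subst sum.swap) (simp add: if_distrib if_distribR sum.delta cong: if_cong)
  finally show ?thesis by (simp add: matrix_vector_mult_def)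
qed

lemma kron_mat_1_right_apply:
  "(kron R (mat 1 :: real^'n^'n) *v f) $ (i, a) = (R *v (\<chi> j. f $ (j, a))) $ i"
proof -
  have "(kron R (mat 1 :: real^'n^'n) *v f) $ (i, a)
      = (\<Sum>j\<in>UNIV. \<Sum>b\<in>UNIV. R $ i $ j * (if a = b then 1 else 0) * f $ (j, b))"
    unfolding kron_def mat_def matrix_vector_mult_def by (simp add: sum_UNIV_Times)
  also have "\<dots> = (\<Sum>j\<in>UNIV. R $ i $ j * f $ (j, a))"
    by (simp add: if_distrib if_distribR sum.delta cong: if_cong)
  finally show ?thesis by (simp add: matrix_vector_mult_def)
qed

lemma kron_mat_1_left_psd:
  fixes R :: "real^'n^'n" and f :: "real^('p::finite \<times> 'n::finite)"
  assumes "\<And>v. v \<bullet> (R *v v) \<ge> 0"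
  shows "f \<bullet> (kron (mat 1 :: real^'p^'p) R *v f) \<ge> 0"
proof -
  have "f \<bullet> (kron (mat 1 :: real^'p^'p) R *v f)
      = (\<Sum>i\<in>UNIV. (\<chi> a. f $ (i, a)) \<bullet> (R *v (\<chi> a. f $ (i, a))))"
    unfolding inner_vec_def by (simp add: sum_UNIV_Times kron_mat_1_left_apply)
  also have "\<dots> \<ge> 0" by (intro sum_nonneg assms)
  finally show ?thesis .
qed

lemma kron_mat_1_right_psd:
  fixes R :: "real^'p^'p" and f :: "real^('p::finite \<times> 'n::finite)"
  assumes "\<And>v. v \<bullet> (R *v v) \<ge> 0"
  shows "f \<bullet> (kron R (mat 1 :: real^'n^'n) *v f) \<ge> 0"
proof -
  have "f \<bullet> (kron R (mat 1 :: real^'n^'n) *v f)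
      = (\<Sum>a\<in>UNIV. (\<chi> i. f $ (i, a)) \<bullet> (R *v (\<chi> i. f $ (i, a))))"
    unfolding inner_vec_def by (simp add: sum_UNIV_Times kron_mat_1_right_apply) (rule sum.swap)
  also have "\<dots> \<ge> 0" by (intro sum_nonneg assms)
  finally show ?thesis .
qed

lemma Qbar_diff_square_psd:
  fixes Q :: "real^'n^'n"
  assumes "Q \<in> Qbar"
  shows "sym_psd (Q - Q ** Q)"
proof -
  have sym: "transpose Q = Q" and psd: "\<And>v. v \<bullet> (Q *v v) \<ge> 0"
    and norm_le: "onorm (\<lambda>v. Q *v v) \<le> 1"
    using assms unfolding Qbar_def sym_psd_def by auto
  have "v \<bullet> ((Q - Q ** Q) *v v) \<ge> 0" for v
  proof -
    define w where "w = Q *v v"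
    have "norm (Q *v w) \<le> onorm (\<lambda>v. Q *v v) * norm w"
      by (rule onorm) simp
    also have "\<dots> \<le> norm w" using mult_right_mono[OF norm_le, of "norm w"] by simp
    finally have "w \<bullet> (Q *v w) \<le> norm w * norm w"
      using norm_cauchy_schwarz[of w "Q *v w"] by (meson mult_left_mono norm_ge_zero order_trans)
    then have wQw: "w \<bullet> (Q *v w) \<le> w \<bullet> w"
      by (metis power2_eq_square power2_norm_eq_inner)
    have vQw: "v \<bullet> (Q *v w) = w \<bullet> w"
      using inner_matrix_vector_transpose[of v Q w] sym by (simp add: w_def)
    have wQv: "w \<bullet> (Q *v v) = w \<bullet> w" by (simp add: w_def)
    have "0 \<le> (v - w) \<bullet> (Q *v (v - w))" by (rule psd)
    also have "\<dots> = v \<bullet> (Q *v v) - v \<bullet> (Q *v w) - w \<bullet> (Q *v v) + w \<bullet> (Q *v w)"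
      by (simp add: matrix_vector_mult_diff_distrib inner_diff_left inner_diff_right)
    finally have "0 \<le> v \<bullet> (Q *v v) - v \<bullet> (Q *v w)" using wQw vQw wQv by linarith
    then show ?thesis
      by (simp add: matrix_vector_mult_diff_rdistrib inner_diff_right w_def matrix_vector_mul_assoc)
  qed
  moreover have "transpose (Q - Q ** Q) = Q - Q ** Q"
    by (simp add: transpose_diff matrix_transpose_mul sym)
  ultimately show ?thesis unfolding sym_psd_def by blast
qed

lemma nonneg_of_decreasing_dominated_by_summable:
  fixes g s :: "nat \<Rightarrow> real"
  assumes decreasing: "\<And>K. g (Suc K) \<le> g K"
    and dominated: "\<And>K. - g K \<le> C * s K"
    and "\<And>K. 0 \<le> s K" and "\<And>N. (\<Sum>K<N. s K) \<le> B"
  shows "0 \<le> g 0"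
proof -
  have "(\<lambda>K. C * s K) \<longlonglongrightarrow> C * 0"
    using summable_LIMSEQ_zero[OF summableI_nonneg_bounded[OF assms(3,4)]] by (intro tendsto_intros)
  moreover have "- g 0 \<le> C * s K" for K
    using decseqD[OF decseq_SucI[of g, OF decreasing], of 0 K] dominated[of K] by simp
  ultimately have "- g 0 \<le> C * 0" by (intro LIMSEQ_le_const) auto
  then show ?thesis by simp
qed

lemma kron_psd_of_lyapunov:
  fixes M Om :: "real^'p^'p" and R :: "real^'n^'n" and f :: "real^('p \<times> 'n)"
  assumes lyap: "transpose M ** Om ** M - Om = - mat 1"
    and Om_psd: "\<And>v. v \<bullet> (Om *v v) \<ge> 0" and R_psd: "\<And>v. v \<bullet> (R *v v) \<ge> 0"
  shows "f \<bullet> (kron Om R *v f) \<ge> 0"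
proof -
  define F where "F K = ((\<lambda>y. kron M (mat 1 :: real^'n^'n) *v y) ^^ K) f" for K
  define g where "g K = F K \<bullet> (kron Om R *v F K)" for K
  define V where "V K = F K \<bullet> (kron Om (mat 1 :: real^'n^'n) *v F K)" for K
  have F_Suc: "F (Suc K) = kron M (mat 1) *v F K" for K by (simp add: F_def)
  have MOM: "transpose M ** Om ** M = Om - mat 1" using lyap by (simp add: algebra_simps)
  have "g (Suc K) = g K - F K \<bullet> (kron (mat 1) R *v F K)" for K
    unfolding g_def F_Suc inner_kron_conj MOM kron_diff_left
    by (simp add: matrix_vector_mult_diff_rdistrib inner_diff_right)
  then have g_decreasing: "g (Suc K) \<le> g K" for K
    using kron_mat_1_left_psd[OF R_psd, of "F K"] by simp
  have "V (Suc K) = V K - (norm (F K))\<^sup>2" for K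
    unfolding V_def F_Suc inner_kron_conj MOM kron_diff_left kron_mat_1
    by (simp add: matrix_vector_mult_diff_rdistrib inner_diff_right power2_norm_eq_inner)
  then have partial_sums: "(\<Sum>K<N. (norm (F K))\<^sup>2) = V 0 - V N" for N
    by (induction N) simp_all
  have "V N \<ge> 0" for N
    unfolding V_def by (rule kron_mat_1_right_psd[OF Om_psd])
  then have sum_bounded: "(\<Sum>K<N. (norm (F K))\<^sup>2) \<le> V 0" for N
    using partial_sums[of N] by simp
  have dominated: "- g K \<le> onorm ((*v) (kron Om R)) * (norm (F K))\<^sup>2" for K
  proof -
    have "- g K \<le> \<bar>g K\<bar>" by simp
    also have "\<dots> \<le> norm (F K) * norm (kron Om R *v F K)"
      unfolding g_def by (rule Cauchy_Schwarz_ineq2)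
    also have "\<dots> \<le> norm (F K) * (onorm ((*v) (kron Om R)) * norm (F K))"
      by (rule mult_left_mono) (simp_all add: onorm)
    finally show ?thesis by (simp add: power2_eq_square mult_ac)
  qed
  have "0 \<le> g 0"
    using nonneg_of_decreasing_dominated_by_summable[OF g_decreasing dominated _ sum_bounded] by simp
  then show ?thesis by (simp add: g_def F_def)
qed

lemma lyapunov_shifted:
  fixes M Om :: "real^'p^'p"
  assumes "transpose M ** Om ** M - Om = - mat 1"
  shows "Om ** (M - mat 1) + transpose (M - mat 1) ** Om
       = - mat 1 - transpose (M - mat 1) ** Om ** (M - mat 1)"
  using assms
  by (simp add: transpose_diff matrix_diff_ldistrib matrix_diff_rdistrib matrix_mul_assoc
      algebra_simps)

definition kron_form :: "real^('p \<times> 'n) \<Rightarrow> real^'p^'p \<Rightarrow> real^'n^'n \<Rightarrow> real" where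
  "kron_form e S T = e \<bullet> (kron S T *v e)"

lemma kron_form_add_left: "kron_form e (S1 + S2) T = kron_form e S1 T + kron_form e S2 T"
  by (simp add: kron_form_def kron_add_left matrix_vector_mult_add_rdistrib inner_add_right)

lemma kron_form_diff_left: "kron_form e (S1 - S2) T = kron_form e S1 T - kron_form e S2 T"
  by (simp add: kron_form_def kron_diff_left matrix_vector_mult_diff_rdistrib inner_diff_right)

lemma kron_form_uminus_left: "kron_form e (- S) T = - kron_form e S T"
  by (simp add: kron_form_def kron_uminus_left matrix_vector_mult_uminus_left)

lemma kron_form_diff_right: "kron_form e S (T1 - T2) = kron_form e S T1 - kron_form e S T2"
  by (simp add: kron_form_def kron_diff_right matrix_vector_mult_diff_rdistrib inner_diff_right)

lemma kron_form_transpose: "kron_form e S T = kron_form e (transpose S) (transpose T)"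
  unfolding kron_form_def by (subst quadratic_form_transpose) (simp add: kron_transpose)

lemma lyapunov_increment_kron:
  fixes M Om :: "real^'p^'p" and Q :: "real^'n^'n" and e :: "real^('p \<times> 'n)"
  assumes lyap: "transpose M ** Om ** M - Om = - mat 1"
    and Om_sym: "transpose Om = Om" and Q_sym: "transpose Q = Q"
  defines "N \<equiv> M - mat 1" and "W \<equiv> kron Om (mat 1 :: real^'n^'n)"
  shows "(e + kron N Q *v e) \<bullet> (W *v (e + kron N Q *v e)) - e \<bullet> (W *v e)
           + kron_form e (mat 1) (Q ** Q)
         = - kron_form e (mat 1) (Q - Q ** Q) - kron_form e (transpose N ** Om ** N) (Q - Q ** Q)"
proof -
  define d where "d = kron N Q *v e"
  have "transpose W = W" by (simp add: W_def kron_transpose Om_sym)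
  then have "(e + d) \<bullet> (W *v (e + d)) - e \<bullet> (W *v e) = 2 * (e \<bullet> (W *v d)) + d \<bullet> (W *v d)"
    using inner_matrix_vector_transpose[of d W e]
    by (simp add: matrix_vector_right_distrib inner_add_left inner_add_right inner_commute)
  also have "e \<bullet> (W *v d) = kron_form e (Om ** N) Q"
    by (simp add: W_def d_def kron_form_def matrix_vector_mul_assoc kron_mult)
  also have "2 * kron_form e (Om ** N) Q = kron_form e (Om ** N + transpose N ** Om) Q"
    unfolding kron_form_add_left using kron_form_transpose[of e "Om ** N" Q]
    by (simp add: matrix_transpose_mul Om_sym Q_sym)
  also have "d \<bullet> (W *v d) = kron_form e (transpose N ** Om ** N) (Q ** Q)"
    by (simp add: W_def d_def kron_form_def inner_transpose_matrix_vector matrix_vector_mul_assoc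
        kron_mult kron_transpose Q_sym matrix_mul_assoc)
  finally show ?thesis
    using lyapunov_shifted[OF lyap]
    by (simp add: d_def N_def kron_form_diff_left kron_form_uminus_left kron_form_diff_right)
qed

lemma lyapunov_decrease_kron:
  fixes M Om :: "real^'p^'p" and Q :: "real^'n^'n" and e :: "real^('p \<times> 'n)"
  assumes lyap: "transpose M ** Om ** M - Om = - mat 1" and Om: "sym_psd Om"
    and Q: "Q \<in> Qbar"
  shows "(e + kron (M - mat 1) Q *v e) \<bullet> (kron Om (mat 1) *v (e + kron (M - mat 1) Q *v e))
           - e \<bullet> (kron Om (mat 1) *v e)
         \<le> - (e \<bullet> (kron (mat 1) (Q ** Q) *v e))"
proof -
  have Om_sym: "transpose Om = Om" and Om_psd: "\<And>v. v \<bullet> (Om *v v) \<ge> 0"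
    using Om unfolding sym_psd_def by auto
  have Q_sym: "transpose Q = Q" using Q unfolding Qbar_def sym_psd_def by auto
  have R_psd: "\<And>v. v \<bullet> ((Q - Q ** Q) *v v) \<ge> 0"
    using Qbar_diff_square_psd[OF Q] unfolding sym_psd_def by blast
  have "kron_form e (mat 1) (Q - Q ** Q) \<ge> 0"
    unfolding kron_form_def by (rule kron_mat_1_left_psd[OF R_psd])
  moreover have "kron_form e (transpose (M - mat 1) ** Om ** (M - mat 1)) (Q - Q ** Q) \<ge> 0"
    unfolding kron_form_def inner_kron_conj[symmetric]
    by (rule kron_psd_of_lyapunov[OF lyap Om_psd R_psd])
  ultimately show ?thesis
    using lyapunov_increment_kron[OF lyap Om_sym Q_sym, of e] by (simp add: kron_form_def)
qed

lemma ones_r_right_absorb: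
  assumes "dt_interconnection L"
  shows "L ** ones_r r = ones_r r"
proof -
  have "(\<Sum>j\<in>UNIV. L $ i $ j) = 1" for i using assms unfolding dt_interconnection_def by auto
  then show ?thesis unfolding ones_r_def matrix_matrix_mult_def
    by (simp add: vec_eq_iff sum_distrib_right[symmetric])
qed

lemma ones_r_left_absorb:
  assumes "r v* L = r"
  shows "ones_r r ** L = ones_r r"
proof -
  have "(\<Sum>i\<in>UNIV. r $ i * L $ i $ j) = r $ j" for j
    using arg_cong[OF assms, of "\<lambda>v. v $ j"] unfolding vector_matrix_mult_def by simp
  then show ?thesis unfolding ones_r_def matrix_matrix_mult_def by (simp add: vec_eq_iff)
qed

lemma ones_r_idempotent:
  assumes "r \<bullet> vec 1 = 1"
  shows "ones_r r ** ones_r r = ones_r r"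
proof -
  have "(\<Sum>i\<in>UNIV. r $ i) = 1" using assms by (simp add: inner_vec_def)
  then show ?thesis unfolding ones_r_def matrix_matrix_mult_def
    by (simp add: vec_eq_iff sum_distrib_right[symmetric])
qed

lemma consensus_error_step:
  fixes L E :: "real^'p^'p" and Q :: "nat \<Rightarrow> real^'n^'n" and x :: "nat \<Rightarrow> real^('p \<times> 'n)"
  assumes LE: "L ** E = E" and EL: "E ** L = E" and EE: "E ** E = E"
    and step: "\<And>k. x (Suc k) = (mat 1 + kron (L - mat 1) (Q k)) *v x k"
  defines "xb \<equiv> kron E (mat 1 :: real^'n^'n) *v x 0"
  shows "x (Suc k) - xb = (x k - xb) + kron (L - E - mat 1) (Q k) *v (x k - xb)"
proof -
  define P where "P = kron E (mat 1 :: real^'n^'n)"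
  have "P ** (mat 1 + kron (L - mat 1) (Q j)) = P" for j
    by (simp add: P_def matrix_add_ldistrib kron_mult matrix_diff_ldistrib EL)
  then have P_x: "P *v x j = xb" for j
    by (induction j) (simp_all add: xb_def P_def step matrix_vector_mul_assoc)
  have "P *v xb = xb" by (simp add: xb_def P_def matrix_vector_mul_assoc kron_mult EE)
  then have P_error: "P *v (x k - xb) = 0" by (simp add: matrix_vector_mult_diff_distrib P_x)
  have "kron (L - mat 1) (Q k) *v xb = 0"
    by (simp add: xb_def matrix_vector_mul_assoc kron_mult matrix_diff_rdistrib LE)
  then have "x (Suc k) - xb = (x k - xb) + kron (L - mat 1) (Q k) *v (x k - xb)"
    by (simp add: step algebra_simps)
  moreover have "kron E (Q k) *v (x k - xb) = kron (mat 1) (Q k) *v (P *v (x k - xb))"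
    by (simp add: P_def matrix_vector_mul_assoc kron_mult)
  ultimately show ?thesis
    by (simp add: P_error kron_diff_left matrix_vector_mult_diff_rdistrib)
qed

theorem lemma4:
  fixes L :: "real^'p^'p" and r :: "real^'p" and Om :: "real^'p^'p"
    and Q :: "nat \<Rightarrow> real^'n^'n" and x :: "nat \<Rightarrow> real^('p \<times> 'n)" and k :: nat
  assumes "dt_interconnection L" and "connected_graph L"
    and "r v* L = r" and "r \<bullet> vec 1 = 1"
    and "sym_pd Om"
    and "transpose (L - ones_r r) ** Om ** (L - ones_r r) - Om = - mat 1"
    and "\<And>k. Q k \<in> Qbar"
    and "\<And>k. x (Suc k) = (mat 1 + kron (L - mat 1) (Q k)) *v x k"
  shows "let V = (\<lambda>y. y \<bullet> (kron Om (mat 1 :: real^'n^'n) *v y));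
             xb = kron (ones_r r) (mat 1 :: real^'n^'n) *v x 0
         in V (x (Suc k) - xb) - V (x k - xb)
            \<le> - ((x k - xb) \<bullet> (kron (mat 1 :: real^'p^'p) (Q k ** Q k) *v (x k - xb)))"
proof -
  define E where "E = ones_r r"
  define e where "e = x k - kron E (mat 1 :: real^'n^'n) *v x 0"
  have error_step: "x (Suc k) - kron E (mat 1) *v x 0 = e + kron (L - E - mat 1) (Q k) *v e"
    unfolding e_def E_def
    by (rule consensus_error_step[where x = x and Q = Q, OF ones_r_right_absorb[OF assms(1)]
          ones_r_left_absorb[OF assms(3)] ones_r_idempotent[OF assms(4)] assms(8)])
  have "sym_psd Om"
    using assms(5) unfolding sym_pd_def sym_psd_def by (metis inner_zero_left less_imp_le order_refl)
  from lyapunov_decrease_kron[OF assms(6)[folded E_def] this assms(7)] show ?thesis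
    unfolding Let_def E_def[symmetric] error_step e_def[symmetric] .
qed

end
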